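(* Let $A$ be a real $m \times N$ matrix and let $\mathcal{N}(A)$ denote its null space. For a vector $\mathbf{w}$, let $k_{-,\mathbf{w}}$ and $k_{+,\mathbf{w}}$ denote the number of negative entries and the number of positive entries of $\mathbf{w}$, respectively. Let $k$ be a nonnegative integer. (i) If $$k < \min_{\mathbf{w} \in \mathcal{N}(A),\, \mathbf{w} \neq 0} \max\{k_{-,\mathbf{w}}, k_{+,\mathbf{w}}\},$$ then for every nonnegative vector $\mathbf{x}\in\mathbb{R}^N$ with at most $k$ nonzero entries, $\mathbf{x}$ is the unique sparsest nonnegative vector $\tilde{\mathbf{x}}$ satisfying $A\tilde{\mathbf{x}} = \mathbf{y}$, where $\mathbf{y}=A\mathbf{x}$. (ii) Conversely, if $$k \geq \min_{\mathbf{w} \in \mathcal{N}(A),\, \mathbf{w} \neq 0} \max\{k_{-,\mathbf{w}}, k_{+,\mathbf{w}}\},$$ then there exists a nonnegative vector $\mathbf{x}$ with at most $k$ nonzero entries which is not the unique sparsest nonnegative vector $\tilde{\mathbf{x}}$ satisfying $A\tilde{\mathbf{x}} = A\mathbf{x}$.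
   Context: A vector is called $k$-sparse if it has at most $k$ nonzero entries. "Sparsest" means having the fewest nonzero entries. *)

theory Defs
  imports "HOL-Analysis.Analysis" "HOL-Library.Extended_Nat"
begin

definition nneg_count :: "real ^ 'n \<Rightarrow> nat" where
  "nneg_count w = card {i. w $ i < 0}"

definition npos_count :: "real ^ 'n \<Rightarrow> nat" where
  "npos_count w = card {i. w $ i > 0}"

definition nnz :: "real ^ 'n \<Rightarrow> nat" where
  "nnz x = card {i. x $ i \<noteq> 0}"

definition nonneg_vec :: "real ^ 'n \<Rightarrow> bool" where
  "nonneg_vec x \<longleftrightarrow> (\<forall>i. x $ i \<ge> 0)"

text \<open>min over nonzero null-space vectors of max(k_-, k_+); the minimum over the
  empty set (trivial null space) is taken to be infinity.\<close>
definition null_minmax :: "real ^ 'n ^ 'm \<Rightarrow> enat" where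
  "null_minmax A = (INF w \<in> {w. A *v w = 0 \<and> w \<noteq> 0}.
       enat (max (nneg_count w) (npos_count w)))"

definition sparsest_nonneg_sol :: "real ^ 'n ^ 'm \<Rightarrow> real ^ 'm \<Rightarrow> real ^ 'n \<Rightarrow> bool" where
  "sparsest_nonneg_sol A y x \<longleftrightarrow> nonneg_vec x \<and> A *v x = y \<and>
     (\<forall>z. nonneg_vec z \<and> A *v z = y \<longrightarrow> nnz x \<le> nnz z)"

definition unique_sparsest_nonneg_sol :: "real ^ 'n ^ 'm \<Rightarrow> real ^ 'm \<Rightarrow> real ^ 'n \<Rightarrow> bool" where
  "unique_sparsest_nonneg_sol A y x \<longleftrightarrow> sparsest_nonneg_sol A y x \<and>
     (\<forall>z. sparsest_nonneg_sol A y z \<longrightarrow> z = x)"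

end

theory Submission
  imports Defs
begin

text \<open>If x \<noteq> z are nonnegative with A x = A z, then w = z - x is a nonzero null vector whose
  negative entries lie in the support of x and whose positive entries lie in the support of z,
  so max(k_-, k_+) \<le> max(nnz x, nnz z). Below the threshold a k-sparse nonnegative x is therefore
  strictly sparser than every other nonnegative solution. Conversely, a null vector w attaining
  the minimum splits as w = w^+ - w^- into two distinct nonnegative solutions of one system, the
  sparser of which has at most max(k_-, k_+) nonzero entries and is not the unique sparsest one.\<close>

lemma unique_sparsest_nonneg_sol_iff:
  "unique_sparsest_nonneg_sol A (A *v x) x \<longleftrightarrow>
     nonneg_vec x \<and> (\<forall>z. nonneg_vec z \<and> A *v z = A *v x \<and> z \<noteq> x \<longrightarrow> nnz x < nnz z)"
proof
  assume u: "unique_sparsest_nonneg_sol A (A *v x) x"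
  have "nnz x < nnz z" if "nonneg_vec z" "A *v z = A *v x" "z \<noteq> x" for z
  proof (rule ccontr)
    assume "\<not> nnz x < nnz z"
    then have "sparsest_nonneg_sol A (A *v x) z"
      using u that by (auto simp: unique_sparsest_nonneg_sol_def sparsest_nonneg_sol_def)
    then show False
      using u that(3) by (simp add: unique_sparsest_nonneg_sol_def)
  qed
  then show "nonneg_vec x \<and> (\<forall>z. nonneg_vec z \<and> A *v z = A *v x \<and> z \<noteq> x \<longrightarrow> nnz x < nnz z)"
    using u by (auto simp: unique_sparsest_nonneg_sol_def sparsest_nonneg_sol_def)
next
  assume x: "nonneg_vec x \<and> (\<forall>z. nonneg_vec z \<and> A *v z = A *v x \<and> z \<noteq> x \<longrightarrow> nnz x < nnz z)"
  then have sparsest: "sparsest_nonneg_sol A (A *v x) x"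
    unfolding sparsest_nonneg_sol_def by (metis less_imp_le order.refl)
  have "z = x" if "sparsest_nonneg_sol A (A *v x) z" for z
  proof (rule ccontr)
    assume "z \<noteq> x"
    with x that have "nnz x < nnz z"
      by (simp add: sparsest_nonneg_sol_def)
    with that x show False
      by (simp add: sparsest_nonneg_sol_def not_le[symmetric])
  qed
  with sparsest show "unique_sparsest_nonneg_sol A (A *v x) x"
    by (simp add: unique_sparsest_nonneg_sol_def)
qed

lemma null_minmax_le:
  assumes "A *v w = 0" and "w \<noteq> 0"
  shows "null_minmax A \<le> enat (max (nneg_count w) (npos_count w))"
  unfolding null_minmax_def by (rule INF_lower) (use assms in auto)

lemma null_minmax_attained:
  assumes "null_minmax A \<noteq> \<infinity>"
  obtains w where "A *v w = 0" "w \<noteq> 0"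
    "null_minmax A = enat (max (nneg_count w) (npos_count w))"
proof -
  let ?S = "{w. A *v w = 0 \<and> w \<noteq> 0}"
  let ?f = "\<lambda>w. enat (max (nneg_count w) (npos_count w))"
  have "?S \<noteq> {}"
  proof
    assume "?S = {}"
    then have "null_minmax A = \<infinity>"
      unfolding null_minmax_def by (simp only: image_empty Inf_empty top_enat_def)
    with assms show False ..
  qed
  then have "Inf (?f ` ?S) \<in> ?f ` ?S"
    unfolding Inf_enat_def by (auto intro: LeastI)
  then obtain w where w: "w \<in> ?S" "Inf (?f ` ?S) = ?f w"
    by blast
  show ?thesis
  proof (rule that)
    show "A *v w = 0" "w \<noteq> 0"
      using w(1) by simp_all
    show "null_minmax A = ?f w"
      using w(2) by (simp add: null_minmax_def)
  qed
qed

lemma nneg_count_uminus [simp]: "nneg_count (- w) = npos_count w"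
  and npos_count_uminus [simp]: "npos_count (- w) = nneg_count w"
  by (auto simp: nneg_count_def npos_count_def)

lemma nneg_count_diff_le:
  fixes x z :: "real ^ 'n"
  assumes "nonneg_vec z"
  shows "nneg_count (z - x) \<le> nnz x"
  unfolding nneg_count_def nnz_def
proof (rule card_mono)
  show "{i. (z - x) $ i < 0} \<subseteq> {i. x $ i \<noteq> 0}"
  proof safe
    fix i assume "(z - x) $ i < 0" "x $ i = 0"
    moreover have "0 \<le> z $ i" using assms by (simp add: nonneg_vec_def)
    ultimately show False by simp
  qed
qed simp

lemma npos_count_diff_le:
  fixes x z :: "real ^ 'n"
  assumes "nonneg_vec x"
  shows "npos_count (z - x) \<le> nnz z"
  unfolding npos_count_def nnz_def
proof (rule card_mono)
  show "{i. (z - x) $ i > 0} \<subseteq> {i. z $ i \<noteq> 0}"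
  proof safe
    fix i assume "(z - x) $ i > 0" "z $ i = 0"
    moreover have "0 \<le> x $ i" using assms by (simp add: nonneg_vec_def)
    ultimately show False by simp
  qed
qed simp

lemma null_minmax_le_nnz:
  assumes "nonneg_vec x" "nonneg_vec z" "A *v z = A *v x" "z \<noteq> x"
  shows "null_minmax A \<le> enat (max (nnz x) (nnz z))"
proof -
  have "null_minmax A \<le> enat (max (nneg_count (z - x)) (npos_count (z - x)))"
    using assms(3,4) by (intro null_minmax_le) (simp_all add: matrix_vector_mult_diff_distrib)
  also have "\<dots> \<le> enat (max (nnz x) (nnz z))"
    using max.mono[OF nneg_count_diff_le[OF assms(2)] npos_count_diff_le[OF assms(1)]] by simp
  finally show ?thesis .
qed

definition pos_part :: "real ^ 'n \<Rightarrow> real ^ 'n" where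
  "pos_part w = (\<chi> i. max (w $ i) 0)"

lemma pos_part_diff_neg: "pos_part w - pos_part (- w) = w"
  by (auto simp: pos_part_def vec_eq_iff max_def)

lemma nonneg_vec_pos_part: "nonneg_vec (pos_part w)"
  by (simp add: nonneg_vec_def pos_part_def)

lemma nnz_pos_part: "nnz (pos_part w) = npos_count w"
  unfolding nnz_def npos_count_def pos_part_def
  by (rule arg_cong[where f = card]) (auto simp: max_def)

lemma null_vector_not_unique_sparsest:
  assumes "A *v w = 0" "w \<noteq> 0" "nneg_count w \<le> npos_count w"
  shows "\<not> unique_sparsest_nonneg_sol A (A *v pos_part w) (pos_part w)"
proof -
  have "A *v pos_part w - A *v pos_part (- w) = 0"
    by (simp add: matrix_vector_mult_diff_distrib[symmetric] pos_part_diff_neg assms(1))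
  then have "A *v pos_part (- w) = A *v pos_part w"
    by simp
  moreover have "pos_part (- w) \<noteq> pos_part w"
    using assms(2) pos_part_diff_neg[of w] by auto
  moreover have "nnz (pos_part (- w)) \<le> nnz (pos_part w)"
    using assms(3) by (simp add: nnz_pos_part)
  ultimately show ?thesis
    using nonneg_vec_pos_part[of "- w"] unfolding unique_sparsest_nonneg_sol_iff
    by (auto simp: not_less[symmetric])
qed

lemma unique_sparsest_nonneg_sol_if_nnz_less:
  assumes "nonneg_vec x" and "enat (nnz x) < null_minmax A"
  shows "unique_sparsest_nonneg_sol A (A *v x) x"
  unfolding unique_sparsest_nonneg_sol_iff
proof (intro conjI allI impI)
  fix z assume z: "nonneg_vec z \<and> A *v z = A *v x \<and> z \<noteq> x"
  show "nnz x < nnz z"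
  proof (rule ccontr)
    assume "\<not> nnz x < nnz z"
    then have "null_minmax A \<le> enat (nnz x)"
      using null_minmax_le_nnz[of x z A] z assms(1) by simp
    with assms(2) show False
      by simp
  qed
qed (rule assms(1))

lemma null_vector_gives_not_unique_sparsest:
  assumes "A *v w = 0" "w \<noteq> 0"
  obtains x where "nonneg_vec x" "nnz x \<le> max (nneg_count w) (npos_count w)"
    "\<not> unique_sparsest_nonneg_sol A (A *v x) x"
proof (cases "nneg_count w \<le> npos_count w")
  case True
  with assms have "\<not> unique_sparsest_nonneg_sol A (A *v pos_part w) (pos_part w)"
    by (rule null_vector_not_unique_sparsest)
  then show ?thesis
    by (rule that[OF nonneg_vec_pos_part, rotated]) (simp add: nnz_pos_part)
next
  case False
  have "A *v - w = 0" "- w \<noteq> 0"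
    using assms matrix_vector_mult_diff_distrib[of A 0 w] by simp_all
  with False have "\<not> unique_sparsest_nonneg_sol A (A *v pos_part (- w)) (pos_part (- w))"
    by (intro null_vector_not_unique_sparsest) simp_all
  then show ?thesis
    by (rule that[OF nonneg_vec_pos_part, rotated]) (simp add: nnz_pos_part)
qed

theorem theorem1:
  fixes A :: "real ^ 'n ^ 'm" and k :: nat
  shows "(enat k < null_minmax A \<longrightarrow>
            (\<forall>x. nonneg_vec x \<and> nnz x \<le> k \<longrightarrow> unique_sparsest_nonneg_sol A (A *v x) x))
       \<and> (enat k \<ge> null_minmax A \<longrightarrow>
            (\<exists>x. nonneg_vec x \<and> nnz x \<le> k \<and> \<not> unique_sparsest_nonneg_sol A (A *v x) x))"
proof safe
  fix x :: "real ^ 'n"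
  assume "enat k < null_minmax A" "nonneg_vec x" "nnz x \<le> k"
  then have "enat (nnz x) < null_minmax A"
    using order.strict_trans1[of "enat (nnz x)" "enat k"] by simp
  with \<open>nonneg_vec x\<close> show "unique_sparsest_nonneg_sol A (A *v x) x"
    by (rule unique_sparsest_nonneg_sol_if_nnz_less)
next
  assume le: "null_minmax A \<le> enat k"
  then have "null_minmax A \<noteq> \<infinity>"
    by (metis infinity_ileE)
  then obtain w where w: "A *v w = 0" "w \<noteq> 0"
    and attained: "null_minmax A = enat (max (nneg_count w) (npos_count w))"
    by (rule null_minmax_attained)
  obtain x where "nonneg_vec x" "nnz x \<le> max (nneg_count w) (npos_count w)"
    "\<not> unique_sparsest_nonneg_sol A (A *v x) x"
    using w by (rule null_vector_gives_not_unique_sparsest)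
  moreover have "max (nneg_count w) (npos_count w) \<le> k"
    using le attained by simp
  ultimately show "\<exists>x. nonneg_vec x \<and> nnz x \<le> k \<and> \<not> unique_sparsest_nonneg_sol A (A *v x) x"
    by (blast intro: order.trans)
qed

end
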